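(* For integers $k>n\ge0$ and real $u\ge k$, $$I_{k,n}(u):=\int_k^u P_{k-n-1}(x-n-1)\,\frac{F_n(x)\,dx}{x-n}=\sum_{j=0}^{n}(-1)^{n-j}\,P_{k-j}(u-j)\,F_j(u).$$
   Context: The functions $P_k$ are defined by $P_0(u)=1$ for $u\ge 0$, and for integers $k\ge1$, $P_k:[k,\infty)\to\mathbb{R}$ is the function with $P_k(k)=0$ and $uP_k'(u)=P_{k-1}(u-1)$ for $u\ge k$. The auxiliary functions $F_k$ are defined by $F_0(u)=1$ for $u\ge0$, and for integers $k\ge1$, $F_k:[k,\infty)\to\mathbb{R}$ is the function with $F_k(k)=0$ and $(u-k+1)F_k'(u)=F_{k-1}(u)$ for $u\ge k$, i.e. $F_k(u)=\int_k^u F_{k-1}(x)\,\frac{dx}{x-k+1}$ (so $F_1(u)=\log u$). *)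

theory Defs
  imports "HOL-Analysis.Analysis"
begin

text \<open>P k is the function with P k k = 0 and u * P k' u = P (k-1) (u-1) for u >= k,
  i.e. P k u = integral over [k,u] of P (k-1) (t-1) / t.  Only values on [k, inf) matter.\<close>
primrec P :: "nat \<Rightarrow> real \<Rightarrow> real" where
  "P 0 u = 1"
| "P (Suc k) u = integral {real (Suc k)..u} (\<lambda>t. P k (t - 1) / t)"

primrec F :: "nat \<Rightarrow> real \<Rightarrow> real" where
  "F 0 u = 1"
| "F (Suc k) u = integral {real (Suc k)..u} (\<lambda>x. F k x / (x - real (Suc k) + 1))"

end

theory Submission
  imports Defs
begin

(* By the product rule and the defining equations of P and F,
     d/dx [P_(k-n)(x-n) F_n(x)] = P_(k-n-1)(x-n-1) F_n(x)/(x-n) + P_(k-n)(x-n) F_(n-1)(x)/(x-n+1),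
   and the two summands are the integrands of I_(k,n) and I_(k,n-1). Since the product vanishes
   at x = k, this gives I_(k,n)(u) = P_(k-n)(u-n) F_n(u) - I_(k,n-1)(u), and unwinding the
   recursion down to I_(k,0) = P_k yields the alternating sum. *)

lemma integral_has_real_derivative_atLeast:
  fixes g :: "real \<Rightarrow> real"
  assumes "continuous_on {a..} g" and "a \<le> x"
  shows "((\<lambda>u. integral {a..u} g) has_real_derivative g x) (at x within {a..})"
proof -
  have "at x within {a..} = at x within {a..x + 1}"
    by (rule at_within_nhd[of x "{..<x + 1}"]) auto
  moreover have "((\<lambda>u. integral {a..u} g) has_real_derivative g x) (at x within {a..x + 1})"
    using assms by (intro integral_has_real_derivative continuous_on_subset[OF assms(1)]) auto
  ultimately show ?thesis
    by simp
qed

lemma P_Suc_eq_integral: "P (Suc m) = (\<lambda>u. integral {real (Suc m)..u} (\<lambda>t. P m (t - 1) / t))"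
  by (simp add: fun_eq_iff)

lemma F_Suc_eq_integral: "F (Suc m) = (\<lambda>u. integral {real (Suc m)..u} (\<lambda>x. F m x / (x - real m)))"
  by (simp add: fun_eq_iff)

lemma P_Suc_has_real_derivative_if_continuous:
  assumes "continuous_on {real m..} (P m)" and "real (Suc m) \<le> x"
  shows "(P (Suc m) has_real_derivative P m (x - 1) / x) (at x within {real (Suc m)..})"
proof -
  have "continuous_on {real (Suc m)..} (\<lambda>t. P m (t - 1))"
    by (rule continuous_on_compose2[OF assms(1)]) (auto intro!: continuous_intros)
  then have "continuous_on {real (Suc m)..} (\<lambda>t. P m (t - 1) / t)"
    by (intro continuous_intros) auto
  then show ?thesis
    unfolding P_Suc_eq_integral using assms(2) by (rule integral_has_real_derivative_atLeast)
qed

lemma F_Suc_has_real_derivative_if_continuous: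
  assumes "continuous_on {real m..} (F m)" and "real (Suc m) \<le> x"
  shows "(F (Suc m) has_real_derivative F m x / (x - real m)) (at x within {real (Suc m)..})"
proof -
  have "continuous_on {real (Suc m)..} (\<lambda>x. F m x / (x - real m))"
    by (intro continuous_intros continuous_on_subset[OF assms(1)]) auto
  then show ?thesis
    unfolding F_Suc_eq_integral using assms(2) by (rule integral_has_real_derivative_atLeast)
qed

lemma continuous_on_P: "continuous_on {real m..} (P m)"
proof (induction m)
  case 0
  then show ?case
    by (simp add: P_def continuous_on_const)
next
  case (Suc m)
  show ?case
    by (rule DERIV_continuous_on[OF P_Suc_has_real_derivative_if_continuous[OF Suc.IH]]) simp
qed

lemma continuous_on_F: "continuous_on {real m..} (F m)"
proof (induction m)
  case 0
  then show ?case
    by (simp add: continuous_on_const)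
next
  case (Suc m)
  show ?case
    by (rule DERIV_continuous_on[OF F_Suc_has_real_derivative_if_continuous[OF Suc.IH]]) simp
qed

lemma P_Suc_has_real_derivative:
  "real (Suc m) \<le> x \<Longrightarrow> (P (Suc m) has_real_derivative P m (x - 1) / x) (at x within {real (Suc m)..})"
  by (rule P_Suc_has_real_derivative_if_continuous[OF continuous_on_P])

lemma F_Suc_has_real_derivative:
  "real (Suc m) \<le> x \<Longrightarrow> (F (Suc m) has_real_derivative F m x / (x - real m)) (at x within {real (Suc m)..})"
  by (rule F_Suc_has_real_derivative_if_continuous[OF continuous_on_F])

lemma P_Suc_shift_has_real_derivative:
  assumes "real (Suc m) + c \<le> x"
  shows "((\<lambda>x. P (Suc m) (x - c)) has_real_derivative P m (x - c - 1) / (x - c))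
    (at x within {real (Suc m) + c..})"
proof -
  have "(\<lambda>x. x - c) ` {real (Suc m) + c..} = {real (Suc m)..}"
    by (auto simp: image_iff intro!: bexI[of _ "_ + c"])
  then have "(P (Suc m) has_real_derivative P m (x - c - 1) / (x - c))
      (at (x - c) within (\<lambda>x. x - c) ` {real (Suc m) + c..})"
    using P_Suc_has_real_derivative[of m "x - c"] assms by simp
  from DERIV_image_chain[OF this DERIV_diff[OF DERIV_ident DERIV_const]]
  show ?thesis
    by (simp add: o_def)
qed

lemma P_shift_mul_F_has_real_derivative:
  assumes "real (Suc q + Suc n) \<le> x"
  shows "((\<lambda>x. P (Suc q) (x - real (Suc n)) * F (Suc n) x) has_real_derivative
      P q (x - real (Suc n) - 1) * F (Suc n) x / (x - real (Suc n))
      + P (Suc q) (x - real n - 1) * F n x / (x - real n))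
    (at x within {real (Suc q + Suc n)..})"
proof -
  have "((\<lambda>x. P (Suc q) (x - real (Suc n))) has_real_derivative
      P q (x - real (Suc n) - 1) / (x - real (Suc n))) (at x within {real (Suc q + Suc n)..})"
    using P_Suc_shift_has_real_derivative[of q "real (Suc n)" x] assms by (simp only: of_nat_add)
  moreover have "(F (Suc n) has_real_derivative F n x / (x - real n))
      (at x within {real (Suc q + Suc n)..})"
    by (rule has_field_derivative_subset[OF F_Suc_has_real_derivative]) (use assms in auto)
  ultimately show ?thesis
    using DERIV_mult by (fastforce simp: algebra_simps)
qed

definition I :: "nat \<Rightarrow> nat \<Rightarrow> real \<Rightarrow> real" where
  "I k n u = integral {real k..u} (\<lambda>x. P (k - n - 1) (x - real n - 1) * F n x / (x - real n))"

lemma I_0: "I (Suc m) 0 u = P (Suc m) u"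
  by (simp add: I_def)

lemma I_Suc:
  assumes "Suc n < k" and "real k \<le> u"
  shows "I k (Suc n) u = P (k - Suc n) (u - real (Suc n)) * F (Suc n) u - I k n u"
proof -
  obtain q where k: "k = Suc q + Suc n"
    using less_imp_Suc_add[OF assms(1)] by auto
  define h where "h x = P (Suc q) (x - real (Suc n)) * F (Suc n) x" for x
  define A where "A x = P q (x - real (Suc n) - 1) * F (Suc n) x / (x - real (Suc n))" for x
  define B where "B x = P (Suc q) (x - real n - 1) * F n x / (x - real n)" for x
  have AB: "((\<lambda>x. A x + B x) has_integral h u - h (real k)) {real k..u}"
  proof (rule fundamental_theorem_of_calculus[OF assms(2)])
    fix x assume "x \<in> {real k..u}"
    then have "(h has_real_derivative A x + B x) (at x within {real k..u})"
      unfolding h_def A_def B_def k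
      by (intro has_field_derivative_subset[OF P_shift_mul_F_has_real_derivative]) auto
    then show "(h has_vector_derivative A x + B x) (at x within {real k..u})"
      by (simp add: has_real_derivative_iff_has_vector_derivative)
  qed
  have "continuous_on {real k..u} B"
  proof -
    have "continuous_on {real k..u} (\<lambda>x. P (Suc q) (x - real n - 1))"
      by (rule continuous_on_compose2[OF continuous_on_P]) (auto simp: k intro!: continuous_intros)
    moreover have "continuous_on {real k..u} (F n)"
      by (rule continuous_on_subset[OF continuous_on_F]) (auto simp: k)
    ultimately show ?thesis
      unfolding B_def by (intro continuous_intros) (auto simp: k)
  qed
  then have "(B has_integral integral {real k..u} B) {real k..u}"
    by (intro integrable_integral integrable_continuous_interval)
  from has_integral_diff[OF AB this]
  have "(A has_integral h u - h (real k) - integral {real k..u} B) {real k..u}"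
    by simp
  moreover have "h (real k) = 0"
    by (simp add: h_def k)
  ultimately have "integral {real k..u} A = h u - integral {real k..u} B"
    by (simp add: integral_unique)
  then show ?thesis
    unfolding I_def h_def A_def B_def k by simp
qed

theorem theorem6:
  fixes k n :: nat and u :: real
  assumes "n < k" and "real k \<le> u"
  shows "integral {real k..u} (\<lambda>x. P (k - n - 1) (x - real n - 1) * F n x / (x - real n))
       = (\<Sum>j=0..n. (-1) ^ (n - j) * P (k - j) (u - real j) * F j u)"
proof -
  have "I k n u = (\<Sum>j=0..n. (-1) ^ (n - j) * P (k - j) (u - real j) * F j u)"
    using assms(1)
  proof (induction n)
    case 0
    then obtain m where "k = Suc m"
      using gr0_implies_Suc by blast
    then show ?case
      by (simp add: I_0)
  next
    case (Suc n)
    have "(\<Sum>j=0..n. (-1) ^ (Suc n - j) * P (k - j) (u - real j) * F j u)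
        = - (\<Sum>j=0..n. (-1) ^ (n - j) * P (k - j) (u - real j) * F j u)"
      by (simp add: sum_negf[symmetric] Suc_diff_le)
    with Suc show ?case
      by (simp add: I_Suc[OF Suc.prems assms(2)])
  qed
  then show ?thesis
    by (simp add: I_def)
qed

end
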